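(* Let $p$ be a prime, $a>0$ an integer, and $n=p^a+1$. Then for every prime $r$ dividing $n$, $n$ satisfies Condition 1 with $p$ and $r$; i.e., for every integer $k$ with $1\le k\le n-1$, $\binom{n}{k}$ is divisible by $p$ or by $r$.
   Context: A positive integer $n$ satisfies Condition 1 with primes $p$ and $q$ if for all integers $k$ with $1\le k\le n-1$ the binomial coefficient $\binom{n}{k}$ is divisible by at least one of $p$ or $q$. *)

theory Defs
  imports "HOL-Computational_Algebra.Primes"
begin

definition condition1 :: "nat \<Rightarrow> nat \<Rightarrow> nat \<Rightarrow> bool" where
  "condition1 n p q \<longleftrightarrow> (\<forall>k. 1 \<le> k \<and> k \<le> n - 1 \<longrightarrow> p dvd (n choose k) \<or> q dvd (n choose k))"

end

theory Submission
  imports Defs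
begin

text \<open>With \<open>q = p ^ a\<close>, Pascal's rule gives \<open>(q + 1 choose k) = (q choose k - 1) + (q choose k)\<close>.
  All inner binomial coefficients of a prime power are divisible by \<open>p\<close>, so \<open>p\<close> divides
  \<open>q + 1 choose k\<close> for \<open>2 \<le> k \<le> q - 1\<close>; the two remaining cases \<open>k = 1\<close> and \<open>k = q\<close>
  give \<open>q + 1\<close> itself, which \<open>r\<close> divides.\<close>

lemma prime_dvd_choose_prime_power:
  fixes p a j :: nat
  assumes p: "prime p" and j: "0 < j" "j < p ^ a"
  shows "p dvd (p ^ a choose j)"
proof (rule ccontr)
  assume "\<not> p dvd (p ^ a choose j)"
  then have "coprime (p ^ a) (p ^ a choose j)"
    using p by (simp add: prime_imp_coprime)
  moreover have "p ^ a dvd j * (p ^ a choose j)"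
    using times_binomial_minus1_eq[OF \<open>0 < j\<close>, of "p ^ a"] by simp
  ultimately have "p ^ a dvd j"
    using coprime_dvd_mult_left_iff by blast
  with j show False
    using nat_dvd_not_less by blast
qed

lemma prime_dvd_choose_Suc_prime_power:
  fixes p a k :: nat
  assumes "prime p" and "2 \<le> k" and "k < p ^ a"
  shows "p dvd (p ^ a + 1 choose k)"
proof -
  obtain i where i: "k = Suc i"
    using \<open>2 \<le> k\<close> by (cases k) auto
  have "p ^ a + 1 choose k = (p ^ a choose i) + (p ^ a choose k)"
    using i by simp
  moreover have "p dvd (p ^ a choose i)" "p dvd (p ^ a choose k)"
    using prime_dvd_choose_prime_power[OF \<open>prime p\<close>] assms(2,3) i by auto
  ultimately show ?thesis
    by simp
qed

theorem mainTheorem3: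
  fixes p a r n :: nat
  assumes "prime p" and "a > 0" and "n = p ^ a + 1"
    and "prime r" and "r dvd n"
  shows "condition1 n p r"
  unfolding condition1_def
proof (intro allI impI)
  fix k assume k: "1 \<le> k \<and> k \<le> n - 1"
  show "p dvd (n choose k) \<or> r dvd (n choose k)"
  proof (cases "k = 1 \<or> k = n - 1")
    case True
    then have "n choose k = n"
      using k \<open>n = p ^ a + 1\<close> by (auto simp: binomial_symmetric[of 1 n, symmetric])
    then show ?thesis
      using \<open>r dvd n\<close> by simp
  next
    case False
    then show ?thesis
      using prime_dvd_choose_Suc_prime_power[OF \<open>prime p\<close>, of k a] k \<open>n = p ^ a + 1\<close> by auto
  qed
qed

end
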